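(* Consider the hierarchical imitation learning setting and the algorithm hg-DAgger (hierarchically guided DAgger) with halving learners described in the context. Suppose the meta-controller class $\mathcal{M}$ and the subpolicy class $\Pi_{\mathrm{LO}}$ are finite and the expert is realizable: $\mu^\star\in\mathcal{M}$ and $\pi^\star_g\in\Pi_{\mathrm{LO}}$ for every $g\in\mathcal{G}$. Then the total cost incurred by the expert in hg-DAgger by round $T$ is at most $$T\,C^{I}_{\mathrm{FULL}} + \bigl(\log_2|\mathcal{M}| + |\mathcal{G}^\star|\log_2|\Pi_{\mathrm{LO}}|\bigr)\bigl(C^{L}_{\mathrm{HI}} + H_{\mathrm{HI}}\,C^{I}_{\mathrm{LO}}\bigr) + \bigl(|\mathcal{G}^\star|\log_2|\Pi_{\mathrm{LO}}|\bigr)\,C^{L}_{\mathrm{LO}},$$ where $\mathcal{G}^\star:=\mu^\star(\mathcal{S})\subseteq\mathcal{G}$ is the set of subgoals actually used by the expert.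
   Context: Setting. There is a state space $\mathcal{S}$, an action space $\mathcal{A}$ and a set of subgoals $\mathcal{G}$. A hierarchical policy consists of a meta-controller $\mu:\mathcal{S}\to\mathcal{G}$ and, for each $g\in\mathcal{G}$, a subpolicy $\pi_g$ which maps a state to an action together with a termination signal $\omega\in\{0,1\}$ (termination is treated as part of an augmented low-level action). An episode starts at a start state $s$; repeatedly, the meta-controller chooses $g=\mu(s)$, then $\pi_g$ is rolled out from $s$ until it signals termination, producing a low-level trajectory $\tau$ of state–action(–termination) pairs, and $s$ is set to the last state of $\tau$; an episode consists of at most $H_{\mathrm{HI}}$ such high-level steps. The high-level trajectory is $\tau_{\mathrm{HI}}=\{(s_h,g_h)\}_h$ and the full trajectory $\tau_{\mathrm{FULL}}$ is the concatenation of the low-level trajectories. The expert has a hierarchical policy $(\mu^\star,\{\pi^\star_g\}_{g\in\mathcal{G}})$. Expert operations and costs (each invocation costs the stated amount): $\mathrm{Inspect}_{\mathrm{FULL}}(\tau_{\mathrm{FULL}})$ returns Pass/Fail according to whether the overall task was accomplished, cost $C^{I}_{\mathrm{FULL}}$; $\mathrm{Label}_{\mathrm{HI}}(\tau_{\mathrm{HI}})$ returns the expert's subgoal $g^\star_h=\mu^\star(s_h)$ for every high-level state $s_h$, cost $C^{L}_{\mathrm{HI}}$; $\mathrm{Inspect}_{\mathrm{LO}}(\tau;g)$ returns Pass/Fail according to whether the low-level trajectory $\tau$ accomplished subgoal $g$, cost $C^{I}_{\mathrm{LO}}$; $\mathrm{Label}_{\mathrm{LO}}(\tau;g)$ returns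 the expert's labels $\pi^\star_g(s)$ for all states $s$ in $\tau$, cost $C^{L}_{\mathrm{LO}}$. The expert is consistent: a subpolicy execution that agrees with $\pi^\star_g$ on every visited state passes $\mathrm{Inspect}_{\mathrm{LO}}(\cdot;g)$, and an episode in which every high-level choice agrees with $\mu^\star$ and every low-level execution agrees with the corresponding $\pi^\star_g$ passes $\mathrm{Inspect}_{\mathrm{FULL}}$. Learners. $\mathcal{M}$ is a finite class of meta-controllers and $\Pi_{\mathrm{LO}}$ a finite class of subpolicies. The meta-controller and each subpolicy $\pi_g$ are learned by the halving algorithm: it maintains a version space (initially $\mathcal{M}$, resp. $\Pi_{\mathrm{LO}}$), predicts by majority vote of the version space, and upon receiving labeled data removes all policies inconsistent with the labels. hg-DAgger (interactive rounds, no behavioral-cloning warm start). In each round $t=1,\dots,T$: obtain a new environment instance with a start state; execute the current hierarchical policy, recording $(s_h,g_h,\tau_h)$ for each high-level step; call $\mathrm{Inspect}_{\mathrm{FULL}}$ on the full trajectory. If it returns Fail: call $\mathrm{Label}_{\mathrm{HI}}(\tau_{\mathrm{HI}})$ to obtain $g^\star_h$; then process $h=1,2,\dots$ in order as long as $g_h=g^\star_h$: call $\mathrm{Inspect}_{\mathrm{LO}}(\tau_h;g_h)$, and if it returns Fail, call $\mathrm{Label}_{\mathrm{LO}}(\tau_h;g_h)$, add these labels to the data of subgoal $g_h$ and stop processing; finally add the high-level labels $\{(s_h,g^\star_h)\}$ to the meta-controller data. At the end of the round, update all halving learners on their data. The total expert cost is the sum of costs of all operations invoked.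
   Formalization: Expert consistency for $\mathrm{Inspect}_{\mathrm{FULL}}$ is strengthened: an episode passes whenever every $g_h$ equals $\mu^\star(s_h)$ and every $\tau_h$ passes $\mathrm{Inspect}_{\mathrm{LO}}(\tau_h;g_h)$, not only when all low-level executions agree with $\pi^\star_g$. The statement above fails without it. *)

theory Defs
  imports Complex_Main
begin

text \<open>States 's, (low-level) actions 'a, subgoals 'g. A subpolicy maps a state to an
  augmented action (action, termination signal). A low-level trajectory is a list of
  (state, (action, termination)) entries; a high-level step is (s_h, g_h, tau_h).\<close>

type_synonym ('s,'a) lotraj = "('s \<times> ('a \<times> bool)) list"
type_synonym ('s,'g,'a) hstep = "'s \<times> 'g \<times> ('s,'a) lotraj"

definition is_maj :: "('x \<Rightarrow> 'y) set \<Rightarrow> 'x \<Rightarrow> 'y \<Rightarrow> bool" where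
  "is_maj V x y \<longleftrightarrow> (\<forall>y'. card {f\<in>V. f x = y'} \<le> card {f\<in>V. f x = y})"

definition lo_wf :: "('s,'a) lotraj \<Rightarrow> bool" where
  "lo_wf \<tau> \<longleftrightarrow> \<tau> \<noteq> [] \<and> snd (snd (last \<tau>)) \<and>
     (\<forall>i < length \<tau> - 1. \<not> snd (snd (\<tau> ! i)))"

definition hi_wf :: "nat \<Rightarrow> ('s,'g,'a) hstep list \<Rightarrow> bool" where
  "hi_wf H ep \<longleftrightarrow> length ep \<le> H \<and>
     (\<forall>i < length ep. lo_wf (snd (snd (ep ! i))) \<and> fst (hd (snd (snd (ep ! i)))) = fst (ep ! i)) \<and>
     (\<forall>i. Suc i < length ep \<longrightarrow> fst (ep ! Suc i) = fst (last (snd (snd (ep ! i)))))"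

definition full_traj :: "('s,'g,'a) hstep list \<Rightarrow> ('s,'a) lotraj" where
  "full_traj ep = concat (map (\<lambda>(s,g,\<tau>). \<tau>) ep)"

text \<open>The episode was produced by the current hierarchical policy: the meta-controller
  and each subpolicy predict by majority vote of their version spaces.\<close>
definition follows :: "('s \<Rightarrow> 'g) set \<Rightarrow> ('g \<Rightarrow> ('s \<Rightarrow> 'a \<times> bool) set)
    \<Rightarrow> ('s,'g,'a) hstep list \<Rightarrow> bool" where
  "follows VM VL ep \<longleftrightarrow>
     (\<forall>(s,g,\<tau>)\<in>set ep. is_maj VM s g \<and> (\<forall>(s',b)\<in>set \<tau>. is_maj (VL g) s' b))"

text \<open>Returns (number of Inspect_LO calls, the labelled (tau, g) if any).\<close>
fun lo_process :: "('s \<Rightarrow> 'g) \<Rightarrow> (('s,'a) lotraj \<Rightarrow> 'g \<Rightarrow> bool) \<Rightarrow> ('s,'g,'a) hstep list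
    \<Rightarrow> nat \<times> (('s,'a) lotraj \<times> 'g) option" where
  "lo_process mu inspL [] = (0, None)"
| "lo_process mu inspL ((s,g,\<tau>) # rest) =
     (if g \<noteq> mu s then (0, None)
      else if inspL \<tau> g then (let r = lo_process mu inspL rest in (Suc (fst r), snd r))
      else (1, Some (\<tau>, g)))"

text \<open>Version spaces of the halving learners at the start of round t (rounds 0,1,...),
  given the episodes ep 0, ep 1, ... executed in the rounds.\<close>
primrec vspaces :: "('s \<Rightarrow> 'g) set \<Rightarrow> ('s \<Rightarrow> 'a \<times> bool) set \<Rightarrow> ('s \<Rightarrow> 'g) \<Rightarrow> ('g \<Rightarrow> 's \<Rightarrow> 'a \<times> bool)
    \<Rightarrow> (('s,'a) lotraj \<Rightarrow> bool) \<Rightarrow> (('s,'a) lotraj \<Rightarrow> 'g \<Rightarrow> bool)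
    \<Rightarrow> (nat \<Rightarrow> ('s,'g,'a) hstep list) \<Rightarrow> nat
    \<Rightarrow> ('s \<Rightarrow> 'g) set \<times> ('g \<Rightarrow> ('s \<Rightarrow> 'a \<times> bool) set)" where
  "vspaces M PiLO mu pist inspF inspL ep 0 = (M, \<lambda>g. PiLO)"
| "vspaces M PiLO mu pist inspF inspL ep (Suc t) =
     (let VM = fst (vspaces M PiLO mu pist inspF inspL ep t);
          VL = snd (vspaces M PiLO mu pist inspF inspL ep t);
          e = ep t
      in if inspF (full_traj e) then (VM, VL)
         else ({f \<in> VM. \<forall>(s,g,\<tau>)\<in>set e. f s = mu s},
               (case snd (lo_process mu inspL e) of
                  None \<Rightarrow> VL
                | Some (\<tau>, g) \<Rightarrow> VL(g := {p \<in> VL g. \<forall>(s,b)\<in>set \<tau>. p s = pist g s}))))"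

definition round_cost :: "real \<Rightarrow> real \<Rightarrow> real \<Rightarrow> real \<Rightarrow> ('s \<Rightarrow> 'g)
    \<Rightarrow> (('s,'a) lotraj \<Rightarrow> bool) \<Rightarrow> (('s,'a) lotraj \<Rightarrow> 'g \<Rightarrow> bool)
    \<Rightarrow> ('s,'g,'a) hstep list \<Rightarrow> real" where
  "round_cost CIF CLH CII CLL mu inspF inspL e =
     CIF + (if inspF (full_traj e) then 0
            else CLH + real (fst (lo_process mu inspL e)) * CII
                 + (if snd (lo_process mu inspL e) = None then 0 else CLL))"

end

theory Submission
  imports Defs
begin

text \<open>The realizable expert survives every halving update, so the
  version spaces stay nonempty and the potential "log2 of the size of the meta-controller
  version space plus the sum over expert subgoals g of log2 of the size of the version space
  for g" is nonnegative and nonincreasing. An episode failing inspection contains a mistake: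
  either a high-level choice differs from the expert's (the majority vote of the
  meta-controller version space was wrong, so it at least halves), or a subpolicy execution
  on an expert subgoal fails its inspection, in which case that trajectory is labelled and
  the majority vote for its subgoal was wrong at one of its states, so that version space
  at least halves. Hence every failed round spends a unit of potential on the high-level
  label and at most H low-level inspections, and every low-level label spends a unit of the
  low-level part of the potential; telescoping gives the bound.\<close>

lemma is_maj_wrong_halves:
  assumes "finite V" "h \<in> V" "is_maj V x y" "h x \<noteq> y" "W \<subseteq> {f\<in>V. f x = h x}"
  shows "2 * card W \<le> card V"
proof -
  have maj: "card {f\<in>V. f x = h x} \<le> card {f\<in>V. f x = y}"
    using assms(3) unfolding is_maj_def by blast
  have "card W \<le> card {f\<in>V. f x = h x}"
    using assms(1,5) by (simp add: card_mono)
  moreover have "card {f\<in>V. f x = h x} + card {f\<in>V. f x = y}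
      = card ({f\<in>V. f x = h x} \<union> {f\<in>V. f x = y})"
    using assms(1,4) by (subst card_Un_disjoint) auto
  moreover have "card ({f\<in>V. f x = h x} \<union> {f\<in>V. f x = y}) \<le> card V"
    using assms(1) by (intro card_mono) auto
  ultimately show ?thesis using maj by linarith
qed

lemma log2_card_halving:
  assumes "finite V" "h \<in> W" "is_maj V x y" "h x \<noteq> y" "W \<subseteq> {f\<in>V. f x = h x}"
  shows "log 2 (card W) + 1 \<le> log 2 (card V)"
proof -
  have "finite W"
    using assms(1,5) finite_subset by fastforce
  then have W: "card W \<ge> 1"
    using assms(2) by (simp add: Suc_le_eq card_gt_0_iff) blast
  have "h \<in> V"
    using assms(2,5) by blast
  then have "2 * card W \<le> card V"
    using is_maj_wrong_halves[of V h x y W] assms(1,3-5) by blast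
  then have "log 2 (2 * real (card W)) \<le> log 2 (card V)"
    using W by (subst log_le_cancel_iff) auto
  then show ?thesis
    using W by (simp add: log_mult)
qed

lemma log2_card_mono:
  assumes "finite B" "A \<subseteq> B" "A \<noteq> {}"
  shows "log 2 (card A) \<le> log 2 (card B)"
proof -
  have "card A > 0"
    using assms by (auto simp: card_gt_0_iff dest: finite_subset)
  then show ?thesis
    using assms by (subst log_le_cancel_iff) (auto intro: card_mono)
qed

lemma log2_card_nonneg:
  assumes "finite A" "x \<in> A"
  shows "log 2 (card A) \<ge> 0"
proof -
  have "card A \<ge> 1"
    using assms by (simp add: Suc_le_eq card_gt_0_iff) blast
  then show ?thesis by simp
qed

lemma sum_le_telescope:
  fixes c b P :: "nat \<Rightarrow> real"
  assumes "\<And>t. t < T \<Longrightarrow> c t \<le> b t + (P t - P (Suc t))" and "P T \<ge> 0"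
  shows "(\<Sum>t<T. c t) \<le> (\<Sum>t<T. b t) + P 0"
proof -
  have "(\<Sum>t<T. c t) \<le> (\<Sum>t<T. b t + (P t - P (Suc t)))"
    using assms(1) by (intro sum_mono) auto
  also have "\<dots> = (\<Sum>t<T. b t) + (P 0 - P T)"
    by (simp add: sum.distrib sum_lessThan_telescope')
  finally show ?thesis using assms(2) by linarith
qed

lemma lo_process_count_le_length: "fst (lo_process mu inspL e) \<le> length e"
  by (induction mu inspL e rule: lo_process.induct) (auto simp: Let_def)

lemma lo_process_SomeD:
  "snd (lo_process mu inspL e) = Some (\<tau>, g) \<Longrightarrow>
     \<exists>s. (s, g, \<tau>) \<in> set e \<and> g = mu s \<and> \<not> inspL \<tau> g"
  by (induction mu inspL e rule: lo_process.induct) (auto simp: Let_def split: if_splits)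

lemma lo_process_labels_failure:
  "(\<forall>(s,g,\<tau>)\<in>set e. g = mu s) \<Longrightarrow> (\<exists>(s,g,\<tau>)\<in>set e. \<not> inspL \<tau> g) \<Longrightarrow>
     snd (lo_process mu inspL e) \<noteq> None"
  by (induction mu inspL e rule: lo_process.induct) (auto simp: Let_def split: if_splits)

locale hg_dagger_run =
  fixes M :: "('s \<Rightarrow> 'g) set" and PiLO :: "('s \<Rightarrow> 'a \<times> bool) set"
    and mu_star :: "'s \<Rightarrow> 'g" and pi_star :: "'g \<Rightarrow> 's \<Rightarrow> 'a \<times> bool"
    and inspF :: "('s,'a) lotraj \<Rightarrow> bool" and inspL :: "('s,'a) lotraj \<Rightarrow> 'g \<Rightarrow> bool"
    and H T :: nat and ep :: "nat \<Rightarrow> ('s,'g,'a) hstep list"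
  assumes finite_M: "finite M" and finite_PiLO: "finite PiLO"
    and realizable_M: "mu_star \<in> M" and realizable_PiLO: "\<And>g. pi_star g \<in> PiLO"
    and finite_Gstar: "finite (range mu_star)"
    and consistent_LO: "\<And>\<tau> g. lo_wf \<tau> \<Longrightarrow> (\<forall>(s,b)\<in>set \<tau>. pi_star g s = b) \<Longrightarrow> inspL \<tau> g"
    and consistent_FULL: "\<And>e. hi_wf H e \<Longrightarrow> (\<forall>(s,g,\<tau>)\<in>set e. g = mu_star s \<and> inspL \<tau> g)
                             \<Longrightarrow> inspF (full_traj e)"
    and run: "\<And>t. t < T \<Longrightarrow> hi_wf H (ep t) \<and>
               follows (fst (vspaces M PiLO mu_star pi_star inspF inspL ep t))
                       (snd (vspaces M PiLO mu_star pi_star inspF inspL ep t)) (ep t)"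
begin

definition VM :: "nat \<Rightarrow> ('s \<Rightarrow> 'g) set" where
  "VM t = fst (vspaces M PiLO mu_star pi_star inspF inspL ep t)"

definition VL :: "nat \<Rightarrow> 'g \<Rightarrow> ('s \<Rightarrow> 'a \<times> bool) set" where
  "VL t = snd (vspaces M PiLO mu_star pi_star inspF inspL ep t)"

definition pot_M :: "nat \<Rightarrow> real" where
  "pot_M t = log 2 (card (VM t))"

definition pot_L :: "nat \<Rightarrow> real" where
  "pot_L t = (\<Sum>g\<in>range mu_star. log 2 (card (VL t g)))"

lemma VM_Suc: "VM (Suc t) = (if inspF (full_traj (ep t)) then VM t
    else {f \<in> VM t. \<forall>(s,g,\<tau>)\<in>set (ep t). f s = mu_star s})"
  by (simp add: VM_def Let_def)

lemma VL_Suc: "VL (Suc t) = (if inspF (full_traj (ep t)) then VL t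
    else (case snd (lo_process mu_star inspL (ep t)) of
            None \<Rightarrow> VL t
          | Some (\<tau>, g) \<Rightarrow> (VL t)(g := {p \<in> VL t g. \<forall>(s,b)\<in>set \<tau>. p s = pi_star g s})))"
  unfolding VL_def by (simp add: Let_def)

lemma VM_Suc_subset: "VM (Suc t) \<subseteq> VM t"
  by (auto simp: VM_Suc)

lemma VL_Suc_subset: "VL (Suc t) g \<subseteq> VL t g"
  by (auto simp: VL_Suc split: option.splits)

lemma expert_in_version_spaces: "mu_star \<in> VM t \<and> (\<forall>g. pi_star g \<in> VL t g)"
proof (induction t)
  case 0
  then show ?case using realizable_M realizable_PiLO by (simp add: VM_def VL_def)
next
  case (Suc t)
  then show ?case
    by (auto simp: VM_Suc VL_Suc split: option.splits)
qed

lemma VM_subset: "VM t \<subseteq> M"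
  by (induction t) (use VM_Suc_subset in \<open>auto simp: VM_def\<close>)

lemma VL_subset: "VL t g \<subseteq> PiLO"
  by (induction t) (use VL_Suc_subset in \<open>auto simp: VL_def\<close>)

lemma finite_VM: "finite (VM t)"
  using VM_subset finite_M finite_subset by blast

lemma finite_VL: "finite (VL t g)"
  using VL_subset finite_PiLO finite_subset by blast

lemma pot_M_nonneg: "pot_M t \<ge> 0"
  unfolding pot_M_def using expert_in_version_spaces finite_VM by (blast intro: log2_card_nonneg)

lemma pot_L_nonneg: "pot_L t \<ge> 0"
  unfolding pot_L_def using expert_in_version_spaces finite_VL
  by (blast intro: sum_nonneg log2_card_nonneg)

lemma pot_M_Suc_le: "pot_M (Suc t) \<le> pot_M t"
  unfolding pot_M_def using expert_in_version_spaces[of "Suc t"]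
  by (intro log2_card_mono finite_VM VM_Suc_subset) auto

lemma log2_card_VL_Suc_le: "log 2 (card (VL (Suc t) g)) \<le> log 2 (card (VL t g))"
  using expert_in_version_spaces[of "Suc t"]
  by (intro log2_card_mono finite_VL VL_Suc_subset) auto

lemma pot_L_diff:
  "pot_L t - pot_L (Suc t) = (\<Sum>g\<in>range mu_star. log 2 (card (VL t g)) - log 2 (card (VL (Suc t) g)))"
  unfolding pot_L_def by (simp add: sum_subtractf)

lemma pot_L_Suc_le: "pot_L (Suc t) \<le> pot_L t"
proof -
  have "0 \<le> pot_L t - pot_L (Suc t)"
    unfolding pot_L_diff by (intro sum_nonneg) (simp add: log2_card_VL_Suc_le)
  then show ?thesis by simp
qed

lemma pot_L_drop_if_labelled:
  assumes "t < T" "\<not> inspF (full_traj (ep t))"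
    and labelled: "snd (lo_process mu_star inspL (ep t)) = Some (\<tau>, g)"
  shows "pot_L (Suc t) + 1 \<le> pot_L t"
proof -
  obtain s where step: "(s, g, \<tau>) \<in> set (ep t)" "g = mu_star s" and fail: "\<not> inspL \<tau> g"
    using lo_process_SomeD[OF labelled] by blast
  have wf: "hi_wf H (ep t)" and fo: "follows (VM t) (VL t) (ep t)"
    using run[OF assms(1)] by (auto simp: VM_def VL_def)
  have "lo_wf \<tau>"
    using wf step(1) unfolding hi_wf_def by (metis in_set_conv_nth snd_conv)
  then obtain s' b where sb: "(s', b) \<in> set \<tau>" "pi_star g s' \<noteq> b"
    using consistent_LO[of \<tau> g] fail by (force simp: case_prod_beta)
  have "is_maj (VL t g) s' b"
    using fo step(1) sb(1) unfolding follows_def by fastforce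
  moreover have "VL (Suc t) g = {p \<in> VL t g. \<forall>(s,b)\<in>set \<tau>. p s = pi_star g s}"
    using assms(2) labelled by (simp add: VL_Suc)
  ultimately have halved: "log 2 (card (VL (Suc t) g)) + 1 \<le> log 2 (card (VL t g))"
    using expert_in_version_spaces[of "Suc t"] sb
    by (intro log2_card_halving[where h="pi_star g", OF finite_VL]) auto
  have "log 2 (card (VL t g)) - log 2 (card (VL (Suc t) g)) \<le> pot_L t - pot_L (Suc t)"
    unfolding pot_L_diff using step(2) finite_Gstar log2_card_VL_Suc_le
    by (intro member_le_sum) auto
  with halved show ?thesis by linarith
qed

lemma failed_round_progress:
  assumes "t < T" "\<not> inspF (full_traj (ep t))"
  shows "pot_M (Suc t) + 1 \<le> pot_M t \<or> snd (lo_process mu_star inspL (ep t)) \<noteq> None"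
proof (cases "\<forall>(s,g,\<tau>)\<in>set (ep t). g = mu_star s")
  case True
  have "\<not> (\<forall>(s,g,\<tau>)\<in>set (ep t). g = mu_star s \<and> inspL \<tau> g)"
    using consistent_FULL run[OF assms(1)] assms(2) by blast
  with True have "\<exists>(s,g,\<tau>)\<in>set (ep t). \<not> inspL \<tau> g"
    by fastforce
  then show ?thesis using lo_process_labels_failure[OF True] by blast
next
  case False
  then obtain s g \<tau> where step: "(s,g,\<tau>) \<in> set (ep t)" "g \<noteq> mu_star s"
    by fastforce
  have "is_maj (VM t) s g"
    using run[OF assms(1)] step(1) unfolding follows_def VM_def VL_def by fastforce
  then have "log 2 (card (VM (Suc t))) + 1 \<le> log 2 (card (VM t))"
    using expert_in_version_spaces[of "Suc t"] assms(2) step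
    by (intro log2_card_halving[where h=mu_star, OF finite_VM]) (auto simp: VM_Suc)
  then show ?thesis by (simp add: pot_M_def)
qed

lemma round_cost_le_potential_drop:
  assumes "t < T" and costs: "CIF \<ge> 0" "CLH \<ge> 0" "CII \<ge> 0" "CLL \<ge> 0"
  defines "dM \<equiv> pot_M t - pot_M (Suc t)" and "dL \<equiv> pot_L t - pot_L (Suc t)"
  shows "round_cost CIF CLH CII CLL mu_star inspF inspL (ep t)
           \<le> CIF + (dM + dL) * (CLH + real H * CII) + dL * CLL"
proof -
  have dM: "dM \<ge> 0" and dL: "dL \<ge> 0"
    using pot_M_Suc_le pot_L_Suc_le by (auto simp: dM_def dL_def)
  show ?thesis
  proof (cases "inspF (full_traj (ep t))")
    case True
    then show ?thesis using dM dL costs by (simp add: round_cost_def)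
  next
    case failed: False
    let ?r = "lo_process mu_star inspL (ep t)"
    have "fst ?r \<le> H"
      using lo_process_count_le_length[of mu_star inspL "ep t"] run[OF assms(1)]
      by (auto simp: hi_wf_def)
    have labelled: "dL \<ge> 1" if "snd ?r \<noteq> None"
      using that pot_L_drop_if_labelled[OF assms(1) failed] by (auto simp: dL_def)
    have progress: "dM + dL \<ge> 1"
      using failed_round_progress[OF assms(1) failed] labelled dM dL by (auto simp: dM_def)
    have "CLH + real (fst ?r) * CII \<le> CLH + real H * CII"
      using \<open>fst ?r \<le> H\<close> costs by (simp add: mult_right_mono)
    also have "\<dots> \<le> (dM + dL) * (CLH + real H * CII)"
      using mult_right_mono[OF progress, of "CLH + real H * CII"] costs by simp
    finally have inspections: "CLH + real (fst ?r) * CII \<le> (dM + dL) * (CLH + real H * CII)" .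
    have "(if snd ?r = None then 0 else CLL) \<le> dL * CLL"
      using labelled mult_right_mono[of 1 dL CLL] dL costs by auto
    with inspections failed show ?thesis by (simp add: round_cost_def)
  qed
qed

end

theorem theorem1:
  fixes M :: "('s \<Rightarrow> 'g) set" and PiLO :: "('s \<Rightarrow> 'a \<times> bool) set"
    and mu_star :: "'s \<Rightarrow> 'g" and pi_star :: "'g \<Rightarrow> 's \<Rightarrow> 'a \<times> bool"
    and inspF :: "('s,'a) lotraj \<Rightarrow> bool" and inspL :: "('s,'a) lotraj \<Rightarrow> 'g \<Rightarrow> bool"
    and H T :: nat and CIF CLH CII CLL :: real
    and ep :: "nat \<Rightarrow> ('s,'g,'a) hstep list"
  assumes finM: "finite M" and finPi: "finite PiLO"
    and real_M: "mu_star \<in> M" and real_Pi: "\<forall>g. pi_star g \<in> PiLO"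
    and finGstar: "finite (range mu_star)"
    and cons_LO: "\<And>\<tau> g. lo_wf \<tau> \<Longrightarrow> (\<forall>(s,b)\<in>set \<tau>. pi_star g s = b) \<Longrightarrow> inspL \<tau> g"
    and cons_FULL: "\<And>e. hi_wf H e \<Longrightarrow> (\<forall>(s,g,\<tau>)\<in>set e. g = mu_star s \<and> inspL \<tau> g)
                        \<Longrightarrow> inspF (full_traj e)"
    and costs: "CIF \<ge> 0" "CLH \<ge> 0" "CII \<ge> 0" "CLL \<ge> 0"
    and run: "\<And>t. t < T \<Longrightarrow> hi_wf H (ep t) \<and>
               follows (fst (vspaces M PiLO mu_star pi_star inspF inspL ep t))
                       (snd (vspaces M PiLO mu_star pi_star inspF inspL ep t)) (ep t)"
  shows "(\<Sum>t<T. round_cost CIF CLH CII CLL mu_star inspF inspL (ep t))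
         \<le> real T * CIF
           + (log 2 (card M) + real (card (range mu_star)) * log 2 (card PiLO)) * (CLH + real H * CII)
           + (real (card (range mu_star)) * log 2 (card PiLO)) * CLL"
proof -
  interpret hg_dagger_run M PiLO mu_star pi_star inspF inspL H T ep
    using assms by unfold_locales auto
  define P where "P t = (pot_M t + pot_L t) * (CLH + real H * CII) + pot_L t * CLL" for t
  have "(\<Sum>t<T. round_cost CIF CLH CII CLL mu_star inspF inspL (ep t)) \<le> (\<Sum>t<T. CIF) + P 0"
  proof (rule sum_le_telescope)
    show "round_cost CIF CLH CII CLL mu_star inspF inspL (ep t) \<le> CIF + (P t - P (Suc t))"
      if "t < T" for t
      using round_cost_le_potential_drop[OF that costs] by (simp add: P_def algebra_simps)
    show "P T \<ge> 0"
      using pot_M_nonneg pot_L_nonneg costs by (simp add: P_def)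
  qed
  moreover have "P 0 = (log 2 (card M) + real (card (range mu_star)) * log 2 (card PiLO))
      * (CLH + real H * CII) + (real (card (range mu_star)) * log 2 (card PiLO)) * CLL"
    by (simp add: P_def pot_M_def pot_L_def VM_def VL_def)
  ultimately show ?thesis by simp
qed

end
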